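(* Suppose $\mathcal M$ is unichain and indexable, and $\widehat{\mathcal M}$ has the same rewards and the same support as $\mathcal M$ and satisfies Assumption (A). There exists a constant $c_\alpha>0$ depending only on $\mathcal M$ such that for every state $s\in\mathcal S$ and every policy $\pi\subseteq\mathcal S$, $$|\alpha^\pi_s-\hat\alpha^\pi_s|\le c_\alpha\|\mathcal M-\widehat{\mathcal M}\|_\infty,$$ where $\alpha^\pi_s$ and $\hat\alpha^\pi_s$ are the activation advantages of $s$ under $\pi$ in $\mathcal M$ and $\widehat{\mathcal M}$ respectively. (One may take $c_\alpha=\max_\pi\{\mathrm{sp}(b^\pi)+8D(P^\pi)\mathrm{sp}(b^\pi)+\tfrac12\mathrm{sp}(b^{\pi,1})\}$, where $b^{\pi,1}$ solves $b^{\pi,1}=b^\pi+P^\pi b^{\pi,1}$.)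
   Context: Setting. An MDP is $\mathcal M=(\mathcal S,\{0,1\},(P^a)_a,(r^a)_a)$, finite $\mathcal S$, row-stochastic $P^0,P^1$, rewards $r^0,r^1\in\mathbb R^{\mathcal S}$. A policy is a subset $\pi\subseteq\mathcal S$ of states where action 1 is played, inducing $P^\pi$, $r^\pi$; $\mathcal M$ is unichain if every $P^\pi$ has a single recurrent class. For a unichain policy, gain $g^\pi$ and bias $b^\pi$ (up to an additive constant) solve $g^\pi\mathbf 1+b^\pi=r^\pi+P^\pi b^\pi$; the activation advantage is $\alpha^\pi_s=r^1_s-r^0_s+(P^1_{s,\cdot}-P^0_{s,\cdot})\cdot b^\pi$. For $\lambda\in\mathbb R$, $\mathcal M(\lambda)$ has the same transitions and rewards $r^1-\lambda\mathbf 1$, $r^0$, with advantages $\alpha^\pi_s(\lambda)$ defined likewise (including the term $-\lambda$). BO (bias optimal) policy in $\mathcal M(\lambda)$: gain optimal and bias-maximal among gain-optimal policies; for unichain MDPs, $\pi$ is BO iff $\alpha^\pi_s(\lambda)\ge0$ for $s\in\pi$, $\le0$ for $s\notin\pi$. $\alpha^*_s(\lambda)$ is $\alpha^\pi_s(\lambda)$ for any BO $\pi$. $\mathcal M$ indexable: for each $s$ there is $\lambda_s$ (Whittle index) with $\alpha^*_s(\lambda)>0$ for $\lambda<\lambda_s$ and $<0$ for $\lambda>\lambda_s$. Hats denote objects in $\widehat{\mathcal M}=(\mathcal S,\{0,1\},(\hat P^a)_a,(r^a)_a)$. $\|A\|_\infty=\max_s\sum_{s'}|A_{s,s'}|$;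 $\|\mathcal M-\widehat{\mathcal M}\|_\infty=\max_a\|P^a-\hat P^a\|_\infty$. Same support: $P^a_{s,s'}>0\iff\hat P^a_{s,s'}>0$. $\mathrm{sp}(v)=\max v-\min v$. Diameter of unichain $P$ with recurrent class $\mathcal S_r$: $D(P)=\max_{s\in\mathcal S,s'\in\mathcal S_r}\mathbb E^P[\tau_{s,s'}]$. Assumption (A): $\|\mathcal M-\widehat{\mathcal M}\|_\infty\le\min\{1/\max_\pi D(P^\pi),\ \tfrac12\min\{|\lambda_s-\lambda_{s'}|:\lambda_s\ne\lambda_{s'}\}\}$. *)

theory Defs
  imports Complex_Main
begin

text \<open>States: a finite type 'a. Actions: bool (False = passive 0, True = active 1).
  A transition kernel family P :: bool => 'a => 'a => real, rewards r :: bool => 'a => real.\<close>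

definition stochastic :: "('a::finite \<Rightarrow> 'a \<Rightarrow> real) \<Rightarrow> bool" where
  "stochastic A \<longleftrightarrow> (\<forall>i j. 0 \<le> A i j) \<and> (\<forall>i. (\<Sum>j\<in>UNIV. A i j) = 1)"

definition polP :: "(bool \<Rightarrow> 'a \<Rightarrow> 'a \<Rightarrow> real) \<Rightarrow> 'a set \<Rightarrow> 'a \<Rightarrow> 'a \<Rightarrow> real" where
  "polP P pol i j = (if i \<in> pol then P True i j else P False i j)"

definition polr :: "(bool \<Rightarrow> 'a \<Rightarrow> real) \<Rightarrow> 'a set \<Rightarrow> 'a \<Rightarrow> real" where
  "polr r pol i = (if i \<in> pol then r True i else r False i)"

definition lamr :: "(bool \<Rightarrow> 'a \<Rightarrow> real) \<Rightarrow> real \<Rightarrow> bool \<Rightarrow> 'a \<Rightarrow> real" where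
  "lamr r lam a i = (if a then r True i - lam else r False i)"

definition reach :: "('a \<Rightarrow> 'a \<Rightarrow> real) \<Rightarrow> 'a \<Rightarrow> 'a \<Rightarrow> bool" where
  "reach A i j \<longleftrightarrow> (i, j) \<in> {(x, y). A x y > 0}\<^sup>*"

definition recurrent :: "('a \<Rightarrow> 'a \<Rightarrow> real) \<Rightarrow> 'a \<Rightarrow> bool" where
  "recurrent A i \<longleftrightarrow> (\<forall>j. reach A i j \<longrightarrow> reach A j i)"

definition single_rec_class :: "('a \<Rightarrow> 'a \<Rightarrow> real) \<Rightarrow> bool" where
  "single_rec_class A \<longleftrightarrow> (\<exists>i. recurrent A i) \<and>
     (\<forall>i j. recurrent A i \<and> recurrent A j \<longrightarrow> reach A i j)"

definition unichain :: "(bool \<Rightarrow> 'a \<Rightarrow> 'a \<Rightarrow> real) \<Rightarrow> bool" where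
  "unichain P \<longleftrightarrow> (\<forall>pol. single_rec_class (polP P pol))"

definition poisson :: "('a::finite \<Rightarrow> 'a \<Rightarrow> real) \<Rightarrow> ('a \<Rightarrow> real) \<Rightarrow> real \<Rightarrow> ('a \<Rightarrow> real) \<Rightarrow> bool" where
  "poisson A rr g b \<longleftrightarrow> (\<forall>i. g + b i = rr i + (\<Sum>j\<in>UNIV. A i j * b j))"

definition adv :: "(bool \<Rightarrow> 'a::finite \<Rightarrow> 'a \<Rightarrow> real) \<Rightarrow> (bool \<Rightarrow> 'a \<Rightarrow> real) \<Rightarrow> ('a \<Rightarrow> real) \<Rightarrow> 'a \<Rightarrow> real" where
  "adv P r b s = r True s - r False s + (\<Sum>j\<in>UNIV. (P True s j - P False s j) * b j)"

text \<open>Bias-optimal policies in M(lambda), via the unichain characterisation given in the context: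
  pol is BO iff alpha^pi_s(lambda) >= 0 on pol and <= 0 off pol (b a bias of pol in M(lambda)).\<close>
definition BO :: "(bool \<Rightarrow> 'a::finite \<Rightarrow> 'a \<Rightarrow> real) \<Rightarrow> (bool \<Rightarrow> 'a \<Rightarrow> real) \<Rightarrow> real \<Rightarrow> 'a set \<Rightarrow> bool" where
  "BO P r lam pol \<longleftrightarrow> (\<exists>g b. poisson (polP P pol) (polr (lamr r lam) pol) g b \<and>
      (\<forall>s. (s \<in> pol \<longrightarrow> adv P (lamr r lam) b s \<ge> 0) \<and> (s \<notin> pol \<longrightarrow> adv P (lamr r lam) b s \<le> 0)))"

text \<open>lam0 is a Whittle index of s: alpha*_s(lambda) > 0 for lambda < lam0 and < 0 for lambda > lam0,
  where alpha*_s(lambda) = alpha^pi_s(lambda) for (any) BO policy pol and any bias b of pol.\<close>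
definition is_whittle :: "(bool \<Rightarrow> 'a::finite \<Rightarrow> 'a \<Rightarrow> real) \<Rightarrow> (bool \<Rightarrow> 'a \<Rightarrow> real) \<Rightarrow> 'a \<Rightarrow> real \<Rightarrow> bool" where
  "is_whittle P r s lam0 \<longleftrightarrow> (\<forall>lam pol g b. BO P r lam pol \<and> poisson (polP P pol) (polr (lamr r lam) pol) g b \<longrightarrow>
      (lam < lam0 \<longrightarrow> adv P (lamr r lam) b s > 0) \<and> (lam > lam0 \<longrightarrow> adv P (lamr r lam) b s < 0))"

definition indexable :: "(bool \<Rightarrow> 'a::finite \<Rightarrow> 'a \<Rightarrow> real) \<Rightarrow> (bool \<Rightarrow> 'a \<Rightarrow> real) \<Rightarrow> bool" where
  "indexable P r \<longleftrightarrow> (\<forall>s. \<exists>lam0. is_whittle P r s lam0)"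

definition whittle :: "(bool \<Rightarrow> 'a::finite \<Rightarrow> 'a \<Rightarrow> real) \<Rightarrow> (bool \<Rightarrow> 'a \<Rightarrow> real) \<Rightarrow> 'a \<Rightarrow> real" where
  "whittle P r s = (THE lam0. is_whittle P r s lam0)"

definition mnorm :: "('a::finite \<Rightarrow> 'a \<Rightarrow> real) \<Rightarrow> real" where
  "mnorm A = Max (range (\<lambda>i. \<Sum>j\<in>UNIV. \<bar>A i j\<bar>))"

definition mdist :: "(bool \<Rightarrow> 'a::finite \<Rightarrow> 'a \<Rightarrow> real) \<Rightarrow> (bool \<Rightarrow> 'a \<Rightarrow> 'a \<Rightarrow> real) \<Rightarrow> real" where
  "mdist P Q = max (mnorm (\<lambda>i j. P False i j - Q False i j)) (mnorm (\<lambda>i j. P True i j - Q True i j))"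

definition same_support :: "(bool \<Rightarrow> 'a \<Rightarrow> 'a \<Rightarrow> real) \<Rightarrow> (bool \<Rightarrow> 'a \<Rightarrow> 'a \<Rightarrow> real) \<Rightarrow> bool" where
  "same_support P Q \<longleftrightarrow> (\<forall>a i j. P a i j > 0 \<longleftrightarrow> Q a i j > 0)"

text \<open>Expected hitting time E[tau_{s,t}], tau_{s,t} = min{n >= 1 : X_n = t} with X_0 = s:
  E[tau] = sum_{n>=0} P(tau > n) = sum_{n>=0} (Q^n 1)_s, Q = A with column t zeroed.\<close>
definition taboo :: "('a \<Rightarrow> 'a \<Rightarrow> real) \<Rightarrow> 'a \<Rightarrow> 'a \<Rightarrow> 'a \<Rightarrow> real" where
  "taboo A t i j = (if j = t then 0 else A i j)"

fun survive :: "('a::finite \<Rightarrow> 'a \<Rightarrow> real) \<Rightarrow> 'a \<Rightarrow> nat \<Rightarrow> 'a \<Rightarrow> real" where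
  "survive A t 0 i = 1"
| "survive A t (Suc n) i = (\<Sum>j\<in>UNIV. taboo A t i j * survive A t n j)"

definition hit_time :: "('a::finite \<Rightarrow> 'a \<Rightarrow> real) \<Rightarrow> 'a \<Rightarrow> 'a \<Rightarrow> real" where
  "hit_time A s t = (\<Sum>n. survive A t n s)"

definition diameter :: "('a::finite \<Rightarrow> 'a \<Rightarrow> real) \<Rightarrow> real" where
  "diameter A = Max {hit_time A s t | s t. recurrent A t}"

definition max_diameter :: "(bool \<Rightarrow> 'a::finite \<Rightarrow> 'a \<Rightarrow> real) \<Rightarrow> real" where
  "max_diameter P = Max (range (\<lambda>pol. diameter (polP P pol)))"

text \<open>Assumption (A). If all Whittle indices coincide the second minimum is over the empty set,
  read as +infinity (no constraint).\<close>
definition assumption_A :: "(bool \<Rightarrow> 'a::finite \<Rightarrow> 'a \<Rightarrow> real) \<Rightarrow> (bool \<Rightarrow> 'a \<Rightarrow> real) \<Rightarrow> (bool \<Rightarrow> 'a \<Rightarrow> 'a \<Rightarrow> real) \<Rightarrow> bool" where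
  "assumption_A P r Q \<longleftrightarrow> mdist P Q \<le> 1 / max_diameter P \<and>
     (\<forall>s s'. whittle P r s \<noteq> whittle P r s' \<longrightarrow> mdist P Q \<le> \<bar>whittle P r s - whittle P r s'\<bar> / 2)"

end

theory Submission
  imports Defs
begin

(* Fix a policy pi and a recurrent state t of P^pi, and let Q be P^pi with column t deleted.
   The hitting times h of t solve h = 1 + Q h, and every solution of e = w + Q e satisfies
   |e| <= max |w| * h.  The Poisson equation makes b - b_t such a solution with w = r - g,
   so sp(b) <= 2 max |r| D.  If the rows of the perturbed matrix differ by at most
   delta <= 1/D, the same estimate applied to the perturbed hitting times shows that they are
   at most 2D.  The difference b - bh solves the Poisson equation of the perturbed chain with
   reward -(Ph - P) b, of size delta sp(b); hence sp(b - bh) = O(delta D^2).  Finally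
   alpha - alpha_hat splits into (P^1 - P^0)(b - bh) and a term (Ph - P) bh, both O(delta). *)

lemma stochastic_nonneg: "stochastic A \<Longrightarrow> 0 \<le> A i j"
  by (simp add: stochastic_def)

lemma stochastic_row_sum: "stochastic A \<Longrightarrow> (\<Sum>j\<in>UNIV. A i j) = 1"
  by (simp add: stochastic_def)

lemma stochastic_row_diff_sum:
  "stochastic A \<Longrightarrow> stochastic B \<Longrightarrow> (\<Sum>j\<in>UNIV. A i j - B k j) = 0"
  by (simp add: sum_subtractf stochastic_row_sum)

lemma stochastic_sum_mult_const:
  "stochastic A \<Longrightarrow> (\<Sum>j\<in>UNIV. A i j * c) = c"
  by (simp add: sum_distrib_right[symmetric] stochastic_row_sum)

lemma stochastic_row_diff_abs_sum_le:
  assumes "stochastic A" and "stochastic B"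
  shows "(\<Sum>j\<in>UNIV. \<bar>A i j - B k j\<bar>) \<le> 2"
proof -
  have "(\<Sum>j\<in>UNIV. \<bar>A i j - B k j\<bar>) \<le> (\<Sum>j\<in>UNIV. A i j + B k j)"
    by (intro sum_mono) (simp add: abs_le_iff stochastic_nonneg[OF assms(1)] stochastic_nonneg[OF assms(2)] add_increasing add_increasing2)
  also have "\<dots> = 2" by (simp add: sum.distrib stochastic_row_sum[OF assms(1)] stochastic_row_sum[OF assms(2)])
  finally show ?thesis .
qed

lemma stochastic_polP:
  assumes "\<And>a. stochastic (P a)"
  shows "stochastic (polP P pol)"
proof -
  have "(\<Sum>j\<in>UNIV. polP P pol i j) = 1" for i
    using stochastic_row_sum[OF assms] by (cases "i \<in> pol") (simp_all add: polP_def)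
  moreover have "0 \<le> polP P pol i j" for i j by (simp add: polP_def stochastic_nonneg[OF assms])
  ultimately show ?thesis by (simp add: stochastic_def)
qed

lemma abs_sum_mult_le_if_sum_eq_0:
  fixes x v :: "'a::finite \<Rightarrow> real"
  assumes "(\<Sum>j\<in>UNIV. x j) = 0" and "\<And>j. \<bar>v j - m\<bar> \<le> R"
  shows "\<bar>\<Sum>j\<in>UNIV. x j * v j\<bar> \<le> (\<Sum>j\<in>UNIV. \<bar>x j\<bar>) * R"
proof -
  have "(\<Sum>j\<in>UNIV. x j * v j) = (\<Sum>j\<in>UNIV. x j * (v j - m))"
    using assms(1) by (simp add: right_diff_distrib sum_subtractf sum_distrib_right[symmetric])
  also have "\<bar>\<dots>\<bar> \<le> (\<Sum>j\<in>UNIV. \<bar>x j\<bar> * R)"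
    by (rule order_trans[OF sum_abs], rule sum_mono) (simp add: abs_mult mult_left_mono assms(2))
  finally show ?thesis by (simp add: sum_distrib_right)
qed

section \<open>Taboo survival probabilities\<close>

lemma taboo_nonneg: "stochastic A \<Longrightarrow> 0 \<le> taboo A t i j"
  by (simp add: taboo_def stochastic_nonneg)

lemma survive_nonneg: "stochastic A \<Longrightarrow> 0 \<le> survive A t n i"
  by (induction n arbitrary: i) (auto intro!: sum_nonneg mult_nonneg_nonneg taboo_nonneg)

lemma survive_le_one:
  assumes "stochastic A"
  shows "survive A t n i \<le> 1"
proof (induction n arbitrary: i)
  case (Suc n)
  have "survive A t (Suc n) i \<le> (\<Sum>j\<in>UNIV. A i j * 1)"
    unfolding survive.simps
    by (intro sum_mono mult_mono Suc)
      (auto simp: taboo_def stochastic_nonneg[OF assms] survive_nonneg[OF assms])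
  then show ?case by (simp add: stochastic_row_sum[OF assms])
qed simp

lemma survive_Suc_le:
  assumes "stochastic A"
  shows "survive A t (Suc n) i \<le> survive A t n i"
proof (induction n arbitrary: i)
  case 0
  show ?case using survive_le_one[OF assms, of t 1 i] by simp
next
  case (Suc n)
  have "(\<Sum>j\<in>UNIV. taboo A t i j * survive A t (Suc n) j) \<le> (\<Sum>j\<in>UNIV. taboo A t i j * survive A t n j)"
    by (intro sum_mono mult_left_mono Suc taboo_nonneg[OF assms])
  then show ?case by simp
qed

lemma decseq_survive: "stochastic A \<Longrightarrow> decseq (\<lambda>n. survive A t n i)"
  by (rule decseq_SucI) (rule survive_Suc_le)

lemma survive_add_le:
  assumes "stochastic A" and "\<And>j. survive A t m j \<le> \<rho>"
  shows "survive A t (n + m) i \<le> \<rho> * survive A t n i"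
proof (induction n arbitrary: i)
  case (Suc n)
  have "survive A t (Suc n + m) i \<le> (\<Sum>j\<in>UNIV. taboo A t i j * (\<rho> * survive A t n j))"
    unfolding add_Suc survive.simps by (intro sum_mono mult_left_mono Suc taboo_nonneg[OF assms(1)])
  also have "\<dots> = \<rho> * survive A t (Suc n) i"
    by (simp add: sum_distrib_left algebra_simps)
  finally show ?case .
qed (simp add: assms(2))

lemma survive_mult_le_power:
  assumes "stochastic A" and "\<And>j. survive A t N j \<le> \<rho>" and "0 \<le> \<rho>"
  shows "survive A t (k * N) i \<le> \<rho> ^ k"
proof (induction k arbitrary: i)
  case (Suc k)
  have "survive A t (k * N + N) i \<le> \<rho> * survive A t (k * N) i"
    by (rule survive_add_le[OF assms(1,2)])
  also have "\<dots> \<le> \<rho> * \<rho> ^ k" using Suc assms(3) by (simp add: mult_left_mono)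
  finally show ?case by (simp add: add.commute)
qed simp

lemma survive_Suc_less_one:
  assumes "stochastic A" and "A i j > 0" and "j = t \<or> survive A t n j < 1"
  shows "survive A t (Suc n) i < 1"
proof -
  define v where "v k = (if k = t then 0 else survive A t n k)" for k
  have v_le: "v k \<le> 1" for k using survive_le_one[OF assms(1)] by (simp add: v_def)
  have "survive A t (Suc n) i = (\<Sum>k\<in>UNIV. A i k * v k)"
    by (auto simp: v_def taboo_def intro: sum.cong)
  also have "\<dots> = 1 - (\<Sum>k\<in>UNIV. A i k * (1 - v k))"
    using stochastic_row_sum[OF assms(1)] by (simp add: right_diff_distrib sum_subtractf)
  also have "\<dots> < 1"
  proof -
    have "0 < A i j * (1 - v j)" using assms(2,3) by (auto simp: v_def)
    also have "\<dots> \<le> (\<Sum>k\<in>UNIV. A i k * (1 - v k))"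
      by (rule member_le_sum) (auto intro!: mult_nonneg_nonneg stochastic_nonneg[OF assms(1)] simp: v_le)
    finally show ?thesis by simp
  qed
  finally show ?thesis .
qed

lemma survive_less_one_if_trancl:
  assumes "(i, t) \<in> {(x, y). A x y > 0}\<^sup>+" and "stochastic A"
  shows "\<exists>n. survive A t n i < 1"
  using assms(1)
proof (induction rule: converse_trancl_induct)
  case (base y)
  show ?case by (rule exI[of _ "Suc 0"], rule survive_Suc_less_one[OF assms(2)]) (use base in auto)
next
  case (step y z)
  then obtain n where "survive A t n z < 1" by auto
  then show ?case by (intro exI[of _ "Suc n"] survive_Suc_less_one[OF assms(2)]) (use step in auto)
qed

lemma trancl_if_reach_all:
  assumes "stochastic A" and "\<forall>i. reach A i t"
  shows "(i, t) \<in> {(x, y). A x y > 0}\<^sup>+"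
proof (cases "i = t")
  case False
  then show ?thesis using assms(2) by (auto simp: reach_def rtrancl_eq_or_trancl)
next
  case True
  obtain j where "A t j > 0"
    using stochastic_row_sum[OF assms(1), of t] stochastic_nonneg[OF assms(1), of t]
    by (metis less_eq_real_def sum.neutral zero_neq_one)
  moreover have "(j, t) \<in> {(x, y). A x y > 0}\<^sup>*" using assms(2) by (simp add: reach_def)
  ultimately show ?thesis using True by (auto intro: rtrancl_into_trancl2)
qed

lemma survive_uniformly_less_one:
  assumes "stochastic A" and "\<forall>i. reach A i t"
  obtains N \<rho> where "0 < N" "0 < \<rho>" "\<rho> < 1" "\<And>j. survive A t N j \<le> \<rho>"
proof -
  obtain nf where nf: "\<And>i. survive A t (nf i) i < 1"
    using survive_less_one_if_trancl[OF trancl_if_reach_all[OF assms] assms(1)] by metis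
  define N where "N = Max (range nf)"
  have less: "survive A t N j < 1" for j
  proof -
    have "nf j \<le> N" unfolding N_def by (rule Max_ge) auto
    then show ?thesis using decseqD[OF decseq_survive[OF assms(1)]] nf[of j] by (meson le_less_trans)
  qed
  \<comment> \<open>The maximum with 1/2 only serves to make rho positive.\<close>
  define \<rho> where "\<rho> = max (Max (range (\<lambda>j. survive A t N j))) (1/2)"
  have "Max (range (\<lambda>j. survive A t N j)) \<in> range (\<lambda>j. survive A t N j)" by (rule Max_in) auto
  then have "\<rho> < 1" using less by (auto simp: \<rho>_def)
  moreover have "0 < N" using less[of t] by (cases N) auto
  moreover have "survive A t N j \<le> \<rho>" for j unfolding \<rho>_def by (auto intro: max.coboundedI1)
  moreover have "0 < \<rho>" unfolding \<rho>_def by simp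
  ultimately show ?thesis using that by blast
qed

lemma survive_le_geometric:
  assumes "stochastic A" and "0 < N" "0 < \<rho>" "\<rho> < 1" "\<And>j. survive A t N j \<le> \<rho>"
  shows "survive A t n i \<le> root N \<rho> ^ n / \<rho>"
proof -
  define \<sigma> where "\<sigma> = root N \<rho>"
  have \<sigma>: "0 < \<sigma>" "\<sigma> < 1" "\<sigma> ^ N = \<rho>" using assms(2-4) by (auto simp: \<sigma>_def)
  have "survive A t n i \<le> survive A t (n div N * N) i"
    by (rule decseqD[OF decseq_survive[OF assms(1)]]) simp
  also have "\<dots> \<le> \<rho> ^ (n div N)"
    using survive_mult_le_power[OF assms(1,5)] assms(3) by simp
  finally have "survive A t n i * \<rho> \<le> \<rho> ^ (n div N) * \<rho>"
    using assms(3) by (simp add: mult_right_mono)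
  also have "\<dots> = \<sigma> ^ (N * (n div N + 1))"
    by (simp only: power_mult \<sigma>(3)) simp
  also have "\<dots> \<le> \<sigma> ^ n"
  proof (rule power_decreasing)
    have "n = N * (n div N) + n mod N" "n mod N < N" "N * (n div N + 1) = N * (n div N) + N"
      using assms(2) by simp_all
    then show "n \<le> N * (n div N + 1)" by linarith
  qed (use \<sigma> in auto)
  finally show ?thesis using assms(3) by (simp add: \<sigma>_def pos_le_divide_eq)
qed

lemma summable_survive:
  assumes "stochastic A" and "\<forall>i. reach A i t"
  shows "summable (\<lambda>n. survive A t n i)"
proof -
  obtain N \<rho> where N\<rho>: "0 < N" "0 < \<rho>" "\<rho> < 1" "\<And>j. survive A t N j \<le> \<rho>"
    using survive_uniformly_less_one[OF assms] by blast
  have "summable (\<lambda>n. root N \<rho> ^ n / \<rho>)" using N\<rho> by (simp add: summable_divide)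
  then show ?thesis
    by (rule summable_comparison_test')
      (simp add: survive_nonneg[OF assms(1)] survive_le_geometric[OF assms(1) N\<rho>])
qed

section \<open>Hitting times\<close>

lemma hit_time_first_step:
  assumes "stochastic A" and "\<forall>i. reach A i t"
  shows "hit_time A i t = 1 + (\<Sum>j\<in>UNIV. taboo A t i j * hit_time A j t)"
proof -
  have sm: "summable (\<lambda>n. survive A t n j)" for j by (rule summable_survive[OF assms])
  have "hit_time A i t = survive A t 0 i + (\<Sum>n. survive A t (Suc n) i)"
    unfolding hit_time_def using suminf_split_head[OF sm, of i] by simp
  also have "(\<Sum>n. survive A t (Suc n) i) = (\<Sum>j\<in>UNIV. \<Sum>n. taboo A t i j * survive A t n j)"
    by (simp add: suminf_sum summable_mult sm)
  also have "\<dots> = (\<Sum>j\<in>UNIV. taboo A t i j * hit_time A j t)"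
    unfolding hit_time_def by (simp add: suminf_mult sm)
  finally show ?thesis by simp
qed

lemma hit_time_nonneg: "stochastic A \<Longrightarrow> \<forall>i. reach A i t \<Longrightarrow> 0 \<le> hit_time A i t"
  unfolding hit_time_def by (intro suminf_nonneg summable_survive survive_nonneg)

lemma hit_time_ge_one:
  assumes "stochastic A" and "\<forall>i. reach A i t"
  shows "1 \<le> hit_time A i t"
  using hit_time_first_step[OF assms, of i]
    sum_nonneg[of UNIV "\<lambda>j. taboo A t i j * hit_time A j t"]
  by (simp add: taboo_nonneg[OF assms(1)] hit_time_nonneg[OF assms])

lemma taboo_fixpoint_unrolled_le:
  assumes "stochastic A"
    and eq: "\<And>i. e i = w i + (\<Sum>j\<in>UNIV. taboo A t i j * e j)"
    and "\<And>i. \<bar>w i\<bar> \<le> W" and "\<And>i. \<bar>e i\<bar> \<le> E"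
  shows "\<bar>e i\<bar> \<le> W * (\<Sum>k<n. survive A t k i) + E * survive A t n i"
proof (induction n arbitrary: i)
  case (Suc n)
  have "\<bar>e i\<bar> \<le> \<bar>w i\<bar> + (\<Sum>j\<in>UNIV. taboo A t i j * \<bar>e j\<bar>)"
    using eq[of i] abs_triangle_ineq[of "w i"] sum_abs[of "\<lambda>j. taboo A t i j * e j" UNIV]
    by (simp add: abs_mult taboo_nonneg[OF assms(1)])
  also have "\<dots> \<le> W + (\<Sum>j\<in>UNIV. taboo A t i j * (W * (\<Sum>k<n. survive A t k j) + E * survive A t n j))"
    by (intro add_mono assms(3) sum_mono mult_left_mono Suc taboo_nonneg[OF assms(1)])
  also have "\<dots> = W * (\<Sum>k<Suc n. survive A t k i) + E * survive A t (Suc n) i"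
    by (simp only: sum.lessThan_Suc_shift survive.simps)
      (simp add: algebra_simps sum.distrib sum_distrib_left sum.swap[of _ UNIV])
  finally show ?case .
qed (simp add: assms(4))

lemma taboo_fixpoint_abs_le:
  assumes "stochastic A" and "\<forall>i. reach A i t"
    and "\<And>i. e i = w i + (\<Sum>j\<in>UNIV. taboo A t i j * e j)" and "\<And>i. \<bar>w i\<bar> \<le> W"
  shows "\<bar>e i\<bar> \<le> W * hit_time A i t"
proof -
  define E where "E = Max (range (\<lambda>i. \<bar>e i\<bar>))"
  have "\<bar>e j\<bar> \<le> E" for j unfolding E_def by (rule Max_ge) auto
  note unrolled = taboo_fixpoint_unrolled_le[OF assms(1,3,4) this]
  have sm: "summable (\<lambda>n. survive A t n i)" by (rule summable_survive[OF assms(1,2)])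
  have "(\<lambda>n. W * (\<Sum>k<n. survive A t k i) + E * survive A t n i) \<longlonglongrightarrow> W * hit_time A i t + E * 0"
    unfolding hit_time_def
    by (intro tendsto_add tendsto_mult_left summable_LIMSEQ sm summable_LIMSEQ_zero)
  then show ?thesis using unrolled by (auto intro: LIMSEQ_le_const)
qed

section \<open>The Poisson equation\<close>

lemma poisson_gain_abs_le:
  assumes "stochastic A" and "poisson A u g b" and "\<And>i. \<bar>u i\<bar> \<le> R"
  shows "\<bar>g\<bar> \<le> R"
proof -
  obtain imax where imax: "b imax = Max (range b)"
    using Max_in[of "range b"] by fastforce
  obtain imin where imin: "b imin = Min (range b)"
    using Min_in[of "range b"] by fastforce
  have "(\<Sum>j\<in>UNIV. A imax j * b j) \<le> (\<Sum>j\<in>UNIV. A imax j * b imax)"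
    unfolding imax by (intro sum_mono mult_left_mono Max_ge stochastic_nonneg[OF assms(1)]) auto
  moreover have "(\<Sum>j\<in>UNIV. A imin j * b imin) \<le> (\<Sum>j\<in>UNIV. A imin j * b j)"
    unfolding imin by (intro sum_mono mult_left_mono Min_le stochastic_nonneg[OF assms(1)]) auto
  moreover have "g + b imax = u imax + (\<Sum>j\<in>UNIV. A imax j * b j)"
    and "g + b imin = u imin + (\<Sum>j\<in>UNIV. A imin j * b j)"
    using assms(2) by (simp_all add: poisson_def)
  ultimately show ?thesis
    using assms(3)[of imax] assms(3)[of imin]
    by (simp add: stochastic_sum_mult_const[OF assms(1)] abs_le_iff)
qed

lemma poisson_taboo_eq:
  assumes "stochastic A" and "poisson A u g b"
  shows "b i - b t = (u i - g) + (\<Sum>j\<in>UNIV. taboo A t i j * (b j - b t))"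
proof -
  have "(\<Sum>j\<in>UNIV. taboo A t i j * (b j - b t)) = (\<Sum>j\<in>UNIV. A i j * (b j - b t))"
    by (rule sum.cong) (auto simp: taboo_def)
  also have "\<dots> = (\<Sum>j\<in>UNIV. A i j * b j) - b t"
    by (simp add: right_diff_distrib sum_subtractf stochastic_sum_mult_const[OF assms(1)])
  finally show ?thesis using assms(2) by (simp add: poisson_def algebra_simps)
qed

lemma poisson_bias_abs_le:
  assumes "stochastic A" and "\<forall>i. reach A i t" and "poisson A u g b" and "\<And>i. \<bar>u i\<bar> \<le> R"
  shows "\<bar>b i - b t\<bar> \<le> 2 * R * hit_time A i t"
proof -
  have "\<bar>u i - g\<bar> \<le> 2 * R" for i
    using assms(4)[of i] poisson_gain_abs_le[OF assms(1,3,4)] by linarith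
  then show ?thesis
    using taboo_fixpoint_abs_le[OF assms(1,2) poisson_taboo_eq[OF assms(1,3)]] by blast
qed

section \<open>Perturbation of the transition matrix\<close>

lemma poisson_diff:
  assumes "poisson A u g b" and "poisson Ah u gh bh"
  shows "poisson Ah (\<lambda>i. - (\<Sum>j\<in>UNIV. (Ah i j - A i j) * b j)) (g - gh) (\<lambda>j. b j - bh j)"
  using assms unfolding poisson_def
  by (simp add: left_diff_distrib right_diff_distrib sum_subtractf algebra_simps)

lemma abs_row_diff_mult_le_half_span:
  assumes "stochastic A" and "stochastic Ah" and "(\<Sum>j\<in>UNIV. \<bar>Ah i j - A i j\<bar>) \<le> \<delta>"
    and "\<And>j. 0 \<le> v j" and "\<And>j. v j \<le> M"
  shows "\<bar>\<Sum>j\<in>UNIV. (Ah i j - A i j) * v j\<bar> \<le> \<delta> * (M / 2)"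
proof -
  have "\<bar>v j - M / 2\<bar> \<le> M / 2" for j using assms(4,5)[of j] unfolding abs_le_iff by linarith
  then have "\<bar>\<Sum>j\<in>UNIV. (Ah i j - A i j) * v j\<bar> \<le> (\<Sum>j\<in>UNIV. \<bar>Ah i j - A i j\<bar>) * (M / 2)"
    by (intro abs_sum_mult_le_if_sum_eq_0 stochastic_row_diff_sum[OF assms(2,1)])
  also have "\<dots> \<le> \<delta> * (M / 2)"
    using assms(3) assms(4,5)[of i] by (intro mult_right_mono) simp_all
  finally show ?thesis .
qed

lemma hit_time_diff_taboo_eq:
  assumes "stochastic A" "\<forall>i. reach A i t" and "stochastic Ah" "\<forall>i. reach Ah i t"
  shows "hit_time Ah i t - hit_time A i t =
    (\<Sum>j\<in>UNIV. (Ah i j - A i j) * (if j = t then 0 else hit_time Ah j t))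
    + (\<Sum>j\<in>UNIV. taboo A t i j * (hit_time Ah j t - hit_time A j t))"
proof -
  have "(\<Sum>j\<in>UNIV. (Ah i j - A i j) * (if j = t then 0 else hit_time Ah j t))
      = (\<Sum>j\<in>UNIV. taboo Ah t i j * hit_time Ah j t) - (\<Sum>j\<in>UNIV. taboo A t i j * hit_time Ah j t)"
    unfolding sum_subtractf[symmetric] by (rule sum.cong) (auto simp: taboo_def algebra_simps)
  then show ?thesis
    using hit_time_first_step[OF assms(1,2), of i] hit_time_first_step[OF assms(3,4), of i]
    by (simp add: right_diff_distrib sum_subtractf)
qed

text \<open>With M the largest Ah-hitting time, the first sum in the previous lemma is at most
  delta M / 2, so the taboo bound gives M <= K + M / 2.\<close>
lemma hit_time_perturbation_le:
  assumes A: "stochastic A" "\<forall>i. reach A i t" and Ah: "stochastic Ah" "\<forall>i. reach Ah i t"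
    and rows: "\<And>i. (\<Sum>j\<in>UNIV. \<bar>Ah i j - A i j\<bar>) \<le> \<delta>"
    and hit_le: "\<And>i. hit_time A i t \<le> K" and "\<delta> * K \<le> 1"
  shows "hit_time Ah i t \<le> 2 * K"
proof -
  define M where "M = Max (range (\<lambda>i. hit_time Ah i t))"
  have "M \<in> range (\<lambda>i. hit_time Ah i t)" unfolding M_def by (rule Max_in) auto
  then obtain i0 where i0: "hit_time Ah i0 t = M" by auto
  have le_M: "hit_time Ah j t \<le> M" for j unfolding M_def by (rule Max_ge) auto
  have M_nonneg: "0 \<le> M" using hit_time_nonneg[OF Ah, of i0] i0 by simp
  have \<delta>_nonneg: "0 \<le> \<delta>" using rows[of i0] by (meson order_trans sum_nonneg abs_ge_zero)
  have centred: "\<bar>\<Sum>j\<in>UNIV. (Ah i j - A i j) * (if j = t then 0 else hit_time Ah j t)\<bar> \<le> \<delta> * (M / 2)" for i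
    by (rule abs_row_diff_mult_le_half_span[OF A(1) Ah(1) rows])
      (use le_M hit_time_nonneg[OF Ah] M_nonneg in auto)
  have close: "\<bar>hit_time Ah j t - hit_time A j t\<bar> \<le> M / 2" for j
  proof -
    have "\<bar>hit_time Ah j t - hit_time A j t\<bar> \<le> \<delta> * (M / 2) * hit_time A j t"
      by (rule taboo_fixpoint_abs_le[OF A hit_time_diff_taboo_eq[OF A Ah] centred])
    also have "\<dots> = (\<delta> * hit_time A j t) * (M / 2)" by simp
    also have "\<dots> \<le> (\<delta> * K) * (M / 2)"
      using M_nonneg by (intro mult_right_mono mult_left_mono hit_le \<delta>_nonneg) simp
    also have "\<dots> \<le> M / 2"
      using mult_right_mono[OF assms(7), of "M / 2"] M_nonneg by simp
    finally show ?thesis .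
  qed
  have "M \<le> K + M / 2" using close[of i0] i0 hit_le[of i0] unfolding abs_le_iff by linarith
  then show ?thesis using le_M[of i] by simp
qed

lemma poisson_bias_perturbation_le:
  assumes A: "stochastic A" "\<forall>i. reach A i t" and Ah: "stochastic Ah" "\<forall>i. reach Ah i t"
    and rows: "\<And>i. (\<Sum>j\<in>UNIV. \<bar>Ah i j - A i j\<bar>) \<le> \<delta>"
    and hit_le: "\<And>i. hit_time A i t \<le> K" and "\<delta> * K \<le> 1"
    and b: "poisson A u g b" and bh: "poisson Ah u gh bh" and u_le: "\<And>i. \<bar>u i\<bar> \<le> R"
  shows "\<bar>(b j - bh j) - (b t - bh t)\<bar> \<le> 8 * \<delta> * R * K\<^sup>2"
    and "\<bar>bh j - bh t\<bar> \<le> 4 * R * K"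
proof -
  have \<delta>_nonneg: "0 \<le> \<delta>" using rows[of t] by (meson order_trans sum_nonneg abs_ge_zero)
  have R_nonneg: "0 \<le> R" using u_le[of t] by linarith
  have K_nonneg: "0 \<le> K" using hit_le[of t] hit_time_nonneg[OF A, of t] by linarith
  have hit_Ah_le: "hit_time Ah i t \<le> 2 * K" for i
    by (rule hit_time_perturbation_le[OF A Ah rows hit_le assms(7)])
  have b_le: "\<bar>b i - b t\<bar> \<le> 2 * R * K" for i
    using poisson_bias_abs_le[OF A b u_le, of i] mult_left_mono[OF hit_le[of i], of "2 * R"] R_nonneg
    by simp
  have "\<bar>- (\<Sum>j\<in>UNIV. (Ah i j - A i j) * b j)\<bar> \<le> \<delta> * (2 * R * K)" for i
  proof -
    have "\<bar>\<Sum>j\<in>UNIV. (Ah i j - A i j) * b j\<bar> \<le> (\<Sum>j\<in>UNIV. \<bar>Ah i j - A i j\<bar>) * (2 * R * K)"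
      by (rule abs_sum_mult_le_if_sum_eq_0[OF stochastic_row_diff_sum[OF Ah(1) A(1)] b_le])
    also have "\<dots> \<le> \<delta> * (2 * R * K)"
      by (rule mult_right_mono[OF rows]) (use b_le[of t] in simp)
    finally show ?thesis by simp
  qed
  from poisson_bias_abs_le[OF Ah poisson_diff[OF b bh] this, of j]
  have "\<bar>(b j - bh j) - (b t - bh t)\<bar> \<le> 2 * (\<delta> * (2 * R * K)) * hit_time Ah j t" by simp
  also have "\<dots> \<le> 2 * (\<delta> * (2 * R * K)) * (2 * K)"
    using \<delta>_nonneg R_nonneg K_nonneg by (intro mult_left_mono hit_Ah_le) simp
  finally show "\<bar>(b j - bh j) - (b t - bh t)\<bar> \<le> 8 * \<delta> * R * K\<^sup>2"
    by (simp add: power2_eq_square algebra_simps)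
  have "\<bar>bh j - bh t\<bar> \<le> 2 * R * hit_time Ah j t" by (rule poisson_bias_abs_le[OF Ah bh u_le])
  also have "\<dots> \<le> 2 * R * (2 * K)" using R_nonneg by (intro mult_left_mono hit_Ah_le) simp
  finally show "\<bar>bh j - bh t\<bar> \<le> 4 * R * K" by simp
qed

lemma row_abs_diff_le_mdist: "(\<Sum>j\<in>UNIV. \<bar>Ph a i j - P a i j\<bar>) \<le> mdist P Ph"
proof -
  have "(\<Sum>j\<in>UNIV. \<bar>P a i j - Ph a i j\<bar>) \<le> mnorm (\<lambda>i j. P a i j - Ph a i j)"
    unfolding mnorm_def by (rule Max_ge) auto
  also have "\<dots> \<le> mdist P Ph" unfolding mdist_def by (cases a) auto
  finally show ?thesis by (simp add: abs_minus_commute)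
qed

lemma polP_row_abs_diff_le_mdist:
  "(\<Sum>j\<in>UNIV. \<bar>polP Ph pol i j - polP P pol i j\<bar>) \<le> mdist P Ph"
  unfolding polP_def using row_abs_diff_le_mdist[of Ph _ i P] by (cases "i \<in> pol") auto

lemma mdist_nonneg: "0 \<le> mdist P Ph"
  using row_abs_diff_le_mdist[of Ph True undefined P] by (meson order_trans sum_nonneg abs_ge_zero)

lemma action_diff_abs_sum_le_mdist:
  "(\<Sum>j\<in>UNIV. \<bar>(Ph True s j - P True s j) - (Ph False s j - P False s j)\<bar>) \<le> 2 * mdist P Ph"
proof -
  have "(\<Sum>j\<in>UNIV. \<bar>(Ph True s j - P True s j) - (Ph False s j - P False s j)\<bar>)
      \<le> (\<Sum>j\<in>UNIV. \<bar>Ph True s j - P True s j\<bar>) + (\<Sum>j\<in>UNIV. \<bar>Ph False s j - P False s j\<bar>)"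
    unfolding sum.distrib[symmetric] by (intro sum_mono abs_triangle_ineq4)
  then show ?thesis
    using row_abs_diff_le_mdist[of Ph True s P] row_abs_diff_le_mdist[of Ph False s P] by linarith
qed

lemma adv_diff_abs_le:
  assumes "\<And>a. stochastic (P a)" and "\<And>a. stochastic (Ph a)"
    and d_le: "\<And>j. \<bar>(b j - bh j) - (b t - bh t)\<bar> \<le> X" and bh_le: "\<And>j. \<bar>bh j - bh t\<bar> \<le> Y"
  shows "\<bar>adv P r b s - adv Ph r bh s\<bar> \<le> 2 * X + 2 * mdist P Ph * Y"
proof -
  define x where "x j = (Ph True s j - P True s j) - (Ph False s j - P False s j)" for j
  have "adv P r b s - adv Ph r bh s
      = (\<Sum>j\<in>UNIV. (P True s j - P False s j) * b j - (Ph True s j - Ph False s j) * bh j)"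
    by (simp add: adv_def sum_subtractf)
  also have "\<dots> = (\<Sum>j\<in>UNIV. (P True s j - P False s j) * (b j - bh j) - x j * bh j)"
    by (rule sum.cong) (simp_all add: x_def algebra_simps)
  also have "\<dots> = (\<Sum>j\<in>UNIV. (P True s j - P False s j) * (b j - bh j)) - (\<Sum>j\<in>UNIV. x j * bh j)"
    by (simp add: sum_subtractf)
  finally have "adv P r b s - adv Ph r bh s
      = (\<Sum>j\<in>UNIV. (P True s j - P False s j) * (b j - bh j)) - (\<Sum>j\<in>UNIV. x j * bh j)" .
  moreover have "\<bar>\<Sum>j\<in>UNIV. (P True s j - P False s j) * (b j - bh j)\<bar> \<le> 2 * X"
  proof -
    have "\<bar>\<Sum>j\<in>UNIV. (P True s j - P False s j) * (b j - bh j)\<bar>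
        \<le> (\<Sum>j\<in>UNIV. \<bar>P True s j - P False s j\<bar>) * X"
      by (rule abs_sum_mult_le_if_sum_eq_0[OF stochastic_row_diff_sum[OF assms(1,1)] d_le])
    also have "\<dots> \<le> 2 * X"
      using d_le[of t] by (intro mult_right_mono stochastic_row_diff_abs_sum_le assms(1)) simp
    finally show ?thesis .
  qed
  moreover have "\<bar>\<Sum>j\<in>UNIV. x j * bh j\<bar> \<le> 2 * mdist P Ph * Y"
  proof -
    have "(\<Sum>j\<in>UNIV. x j) = 0"
      using stochastic_row_diff_sum[OF assms(2)[of True] assms(1)[of True], of s s]
        stochastic_row_diff_sum[OF assms(2)[of False] assms(1)[of False], of s s]
      by (simp add: x_def sum_subtractf)
    then have "\<bar>\<Sum>j\<in>UNIV. x j * bh j\<bar> \<le> (\<Sum>j\<in>UNIV. \<bar>x j\<bar>) * Y"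
      by (rule abs_sum_mult_le_if_sum_eq_0[OF _ bh_le])
    also have "(\<Sum>j\<in>UNIV. \<bar>x j\<bar>) \<le> 2 * mdist P Ph"
      unfolding x_def by (rule action_diff_abs_sum_le_mdist)
    then have "(\<Sum>j\<in>UNIV. \<bar>x j\<bar>) * Y \<le> 2 * mdist P Ph * Y"
      using bh_le[of t] by (intro mult_right_mono) simp_all
    finally show ?thesis .
  qed
  ultimately show ?thesis by (simp add: abs_triangle_ineq4 order_trans[OF abs_triangle_ineq4] add_mono)
qed

text \<open>A state reachable from i with the fewest reachable states is recurrent; it reaches t
  because all recurrent states communicate.\<close>
lemma reach_recurrent_if_single_rec_class:
  fixes A :: "'a::finite \<Rightarrow> 'a \<Rightarrow> real"
  assumes "single_rec_class A" and "recurrent A t"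
  shows "reach A i t"
proof -
  define S where "S x = {y. reach A x y}" for x
  obtain j where ij: "reach A i j" and least: "\<And>k. reach A i k \<Longrightarrow> card (S j) \<le> card (S k)"
    using ex_has_least_nat[of "reach A i" i "\<lambda>x. card (S x)"] by (auto simp: reach_def)
  have "recurrent A j" unfolding recurrent_def
  proof (intro allI impI)
    fix k assume jk: "reach A j k"
    have sub: "S k \<subseteq> S j" using jk by (auto simp: S_def reach_def)
    have "reach A i k" using ij jk by (auto simp: reach_def)
    then have "S k = S j" using least card_subset_eq[OF _ sub] card_mono[OF _ sub] by fastforce
    moreover have "j \<in> S j" by (simp add: S_def reach_def)
    ultimately have "j \<in> S k" by simp
    then show "reach A k j" by (simp add: S_def)
  qed
  then have "reach A j t" using assms unfolding single_rec_class_def by blast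
  then show ?thesis using ij by (auto simp: reach_def)
qed

lemma unichain_obtains_recurrent:
  fixes P :: "bool \<Rightarrow> 'a::finite \<Rightarrow> 'a \<Rightarrow> real"
  assumes "unichain P"
  obtains t where "recurrent (polP P pol) t" and "\<forall>i. reach (polP P pol) i t"
proof -
  have single: "single_rec_class (polP P pol)" using assms by (simp add: unichain_def)
  then obtain t where "recurrent (polP P pol) t" unfolding single_rec_class_def by blast
  then show ?thesis using that reach_recurrent_if_single_rec_class[OF single] by blast
qed

lemma reach_polP_same_support:
  assumes "same_support P Ph"
  shows "reach (polP Ph pol) = reach (polP P pol)"
proof -
  have "{(x, y). 0 < polP Ph pol x y} = {(x, y). 0 < polP P pol x y}"
    using assms by (auto simp: same_support_def polP_def)
  then show ?thesis by (simp add: reach_def [abs_def])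
qed

lemma hit_time_le_max_diameter:
  assumes "recurrent (polP P pol) t"
  shows "hit_time (polP P pol) i t \<le> max_diameter P"
proof -
  have "finite {hit_time (polP P pol) s t' | s t'. recurrent (polP P pol) t'}"
    by (rule finite_subset[of _ "range (\<lambda>(s, t'). hit_time (polP P pol) s t')"]) auto
  then have "hit_time (polP P pol) i t \<le> diameter (polP P pol)"
    unfolding diameter_def by (rule Max_ge) (use assms in auto)
  also have "\<dots> \<le> max_diameter P" unfolding max_diameter_def by (rule Max_ge) auto
  finally show ?thesis .
qed

lemma max_diameter_ge_one:
  assumes "\<And>a. stochastic (P a)" and "unichain P"
  shows "1 \<le> max_diameter P"
proof -
  obtain t where t: "recurrent (polP P {}) t" and reach: "\<forall>i. reach (polP P {}) i t"
    using unichain_obtains_recurrent[OF assms(2)] .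
  have "1 \<le> hit_time (polP P {}) t t" by (rule hit_time_ge_one[OF stochastic_polP[OF assms(1)] reach])
  also have "\<dots> \<le> max_diameter P" by (rule hit_time_le_max_diameter[OF t])
  finally show ?thesis .
qed

lemma adv_perturbation_le:
  fixes P Ph :: "bool \<Rightarrow> 'a::finite \<Rightarrow> 'a \<Rightarrow> real"
  assumes "\<And>a. stochastic (P a)" and "\<And>a. stochastic (Ph a)"
    and "unichain P" and "same_support P Ph" and "mdist P Ph * max_diameter P \<le> 1"
    and "\<And>a i. \<bar>r a i\<bar> \<le> R"
    and "poisson (polP P pol) (polr r pol) g b" and "poisson (polP Ph pol) (polr r pol) gh bh"
  shows "\<bar>adv P r b s - adv Ph r bh s\<bar>
    \<le> mdist P Ph * (16 * R * (max_diameter P)\<^sup>2 + 8 * R * max_diameter P)"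
proof -
  obtain t where t: "recurrent (polP P pol) t" and reach: "\<forall>i. reach (polP P pol) i t"
    using unichain_obtains_recurrent[OF assms(3)] .
  have reach_h: "\<forall>i. reach (polP Ph pol) i t"
    using reach reach_polP_same_support[OF assms(4)] by simp
  have "\<bar>polr r pol i\<bar> \<le> R" for i by (simp add: polr_def assms(6))
  note bias_le = poisson_bias_perturbation_le[OF stochastic_polP[OF assms(1)] reach
      stochastic_polP[OF assms(2)] reach_h polP_row_abs_diff_le_mdist
      hit_time_le_max_diameter[OF t] assms(5,7,8) this]
  have "\<bar>adv P r b s - adv Ph r bh s\<bar>
      \<le> 2 * (8 * mdist P Ph * R * (max_diameter P)\<^sup>2) + 2 * mdist P Ph * (4 * R * max_diameter P)"
    by (rule adv_diff_abs_le[where b = b and bh = bh and t = t, OF assms(1,2) bias_le])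
  then show ?thesis by (simp add: algebra_simps)
qed

theorem mainTheorem5:
  fixes P :: "bool \<Rightarrow> 'a::finite \<Rightarrow> 'a \<Rightarrow> real" and r :: "bool \<Rightarrow> 'a \<Rightarrow> real"
  assumes "\<forall>a. stochastic (P a)"
    and "unichain P"
    and "indexable P r"
  shows "\<exists>c>0. \<forall>Ph :: bool \<Rightarrow> 'a \<Rightarrow> 'a \<Rightarrow> real.
           (\<forall>a. stochastic (Ph a)) \<and> same_support P Ph \<and> assumption_A P r Ph \<longrightarrow>
           (\<forall>pol s g b gh bh.
              poisson (polP P pol) (polr r pol) g b \<and> poisson (polP Ph pol) (polr r pol) gh bh \<longrightarrow>
              \<bar>adv P r b s - adv Ph r bh s\<bar> \<le> c * mdist P Ph)"
proof -
  define R where "R = Max (range (\<lambda>(a, i). \<bar>r a i\<bar>))"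
  have r_le: "\<bar>r a i\<bar> \<le> R" for a i unfolding R_def by (rule Max_ge) auto
  define D where "D = max_diameter P"
  have "1 \<le> D" unfolding D_def by (rule max_diameter_ge_one) (use assms(1,2) in auto)
  define c where "c = 1 + 16 * R * D\<^sup>2 + 8 * R * D"
  have "0 \<le> R" using r_le[of True] abs_ge_zero order_trans by blast
  then have "0 \<le> R * D\<^sup>2" "0 \<le> R * D" using \<open>1 \<le> D\<close> by simp_all
  then have "0 < c" unfolding c_def by linarith
  show ?thesis
  proof (intro exI[of _ c] conjI allI impI)
    fix Ph :: "bool \<Rightarrow> 'a \<Rightarrow> 'a \<Rightarrow> real" and pol s g b gh bh
    assume "(\<forall>a. stochastic (Ph a)) \<and> same_support P Ph \<and> assumption_A P r Ph"
      and "poisson (polP P pol) (polr r pol) g b \<and> poisson (polP Ph pol) (polr r pol) gh bh"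
    then have Ph: "\<And>a. stochastic (Ph a)" "same_support P Ph" "assumption_A P r Ph"
      and bias: "poisson (polP P pol) (polr r pol) g b" "poisson (polP Ph pol) (polr r pol) gh bh"
      by auto
    have "mdist P Ph * D \<le> 1"
      using Ph(3) \<open>1 \<le> D\<close> by (simp add: assumption_A_def D_def field_simps)
    then have "\<bar>adv P r b s - adv Ph r bh s\<bar> \<le> mdist P Ph * (16 * R * D\<^sup>2 + 8 * R * D)"
      unfolding D_def by (rule adv_perturbation_le[OF assms(1)[rule_format] Ph(1) assms(2) Ph(2) _ r_le bias])
    also have "\<dots> \<le> c * mdist P Ph" using mdist_nonneg[of P Ph] by (simp add: c_def algebra_simps)
    finally show "\<bar>adv P r b s - adv Ph r bh s\<bar> \<le> c * mdist P Ph" .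
  qed fact
qed

end
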